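(* Let $A$ with projections $\pi_B:A\to B$, $\pi_C:A\to C$ be a pullback in $\mathbf{Sets}$ of $f_1:B\to D$ and $g_1:C\to D$, where $g_1$ is injective. Then $\mathcal{PP}_b(A)$ with $\mathcal{PP}_b(\pi_B),\mathcal{PP}_b(\pi_C)$ is a pullback of $\mathcal{PP}_b(f_1)$ and $\mathcal{PP}_b(g_1)$ in $\mathbf{Sets}$.
   Context: For a set $M$ whose elements are treated as atoms (urelements, distinct from every set built below), let $T_1=\mathcal{P}(M)$, $T_{n+1}=T_n\cup\mathcal{P}(T_n)$, and $\mathcal{PP}_b(M)=\bigcup_{n\ge 1}T_n$. For $f:M\to N$, $\mathcal{PP}_b(f)$ is defined recursively on $X\in\mathcal{PP}_b(M)$ by $\mathcal{PP}_b(f)(X)=\{f(x)\mid x\in X\cap M\}\cup\{\mathcal{PP}_b(f)(x)\mid x\in X\setminus M\}$; this makes $\mathcal{PP}_b$ a functor $\mathbf{Sets}\to\mathbf{Sets}$. *)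

theory Defs
  imports Main
begin

text \<open>
  No single HOL type built from the atom type can contain
  PP_b(M) (its cardinality is beth_omega(|M|)), so PP_b(M) lives in an arbitrary
  universe type 'v equipped with a set-former  mk :: ('a + 'v) set => 'v.
  A raw set S :: ('a + 'v) set has atoms  Inl a  (urelements, distinct from every
  set) and set-elements  Inr x;  mk S is the set with these members.
  pp_raw mk M n  is the family of raw sets whose images form T_(n+1).
\<close>

primrec pp_raw :: "(('a + 'v) set \<Rightarrow> 'v) \<Rightarrow> 'a set \<Rightarrow> nat \<Rightarrow> ('a + 'v) set set" where
  "pp_raw mk M 0 = Pow (Inl ` M)"
| "pp_raw mk M (Suc n) = pp_raw mk M n \<union> Pow (Inr ` (mk ` pp_raw mk M n))"

text \<open>T_n = mk ` pp_raw mk M (n - 1); PP_b(M) is the union of all levels.\<close>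
definition PPb :: "(('a + 'v) set \<Rightarrow> 'v) \<Rightarrow> 'a set \<Rightarrow> 'v set" where
  "PPb mk M = mk ` (\<Union>n. pp_raw mk M n)"

text \<open>The universe is adequate for M: mk is injective on all raw sets needed
  (extensionality: distinct sets are distinct elements of 'v).\<close>
definition pp_universe :: "(('a + 'v) set \<Rightarrow> 'v) \<Rightarrow> 'a set \<Rightarrow> bool" where
  "pp_universe mk M \<longleftrightarrow> inj_on mk (\<Union>n. pp_raw mk M n)"

text \<open>Graph of PP_b(f), following the recursive definition
  PP_b(f)(X) = {f x | x in X cap M} cup {PP_b(f)(x) | x in X - M}.\<close>
inductive ppgraph :: "(('a + 'v) set \<Rightarrow> 'v) \<Rightarrow> (('b + 'w) set \<Rightarrow> 'w) \<Rightarrow> 'a set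
    \<Rightarrow> ('a \<Rightarrow> 'b) \<Rightarrow> 'v \<Rightarrow> 'w \<Rightarrow> bool"
  for mk :: "('a + 'v) set \<Rightarrow> 'v" and mk' :: "('b + 'w) set \<Rightarrow> 'w" and M f where
  "S \<in> (\<Union>n. pp_raw mk M n) \<Longrightarrow> (\<forall>x. Inr x \<in> S \<longrightarrow> ppgraph mk mk' M f x (g x)) \<Longrightarrow>
   ppgraph mk mk' M f (mk S)
     (mk' ((\<lambda>a. Inl (f a)) ` {a. Inl a \<in> S} \<union> (\<lambda>x. Inr (g x)) ` {x. Inr x \<in> S}))"

definition ppmap :: "(('a + 'v) set \<Rightarrow> 'v) \<Rightarrow> (('b + 'w) set \<Rightarrow> 'w) \<Rightarrow> 'a set
    \<Rightarrow> ('a \<Rightarrow> 'b) \<Rightarrow> 'v \<Rightarrow> 'w" where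
  "ppmap mk mk' M f v = (THE w. ppgraph mk mk' M f v w)"

definition is_pullback :: "'p set \<Rightarrow> 'b set \<Rightarrow> 'c set \<Rightarrow> 'd set \<Rightarrow> ('p \<Rightarrow> 'b) \<Rightarrow> ('p \<Rightarrow> 'c)
    \<Rightarrow> ('b \<Rightarrow> 'd) \<Rightarrow> ('c \<Rightarrow> 'd) \<Rightarrow> bool" where
  "is_pullback P B C D p q f g \<longleftrightarrow>
     p ` P \<subseteq> B \<and> q ` P \<subseteq> C \<and> f ` B \<subseteq> D \<and> g ` C \<subseteq> D \<and>
     (\<forall>x\<in>P. f (p x) = g (q x)) \<and>
     (\<forall>b\<in>B. \<forall>c\<in>C. f b = g c \<longrightarrow> (\<exists>!x. x \<in> P \<and> p x = b \<and> q x = c))"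

end

theory Submission
  imports Defs
begin

text \<open>
  PP_b(f) sends a set to the f-images of its atoms together with the PP_b(f)-images of its
  set-elements, so by induction on rank PP_b preserves composition and injective maps, and it
  reflects rank. Since g1 is injective, the pullback A is a preimage: piB is injective, hence so
  is PP_b(piB), which gives uniqueness; and PP_b(g1) is injective, so any z with
  PP_b(piB)(z) = X already satisfies PP_b(piC)(z) = Y. Such a z is found by induction on X as the
  set of all atoms and elements of PP_b(A) whose images lie in X; no choice is needed, and
  reflection of rank keeps this preimage inside PP_b(A).
\<close>

abbreviation pp_raws :: "(('a + 'v) set \<Rightarrow> 'v) \<Rightarrow> 'a set \<Rightarrow> ('a + 'v) set set" where
  "pp_raws mk M \<equiv> \<Union>n. pp_raw mk M n"

lemma pp_raw_mono: "m \<le> n \<Longrightarrow> pp_raw mk M m \<subseteq> pp_raw mk M n"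
  by (induction n) (auto simp: le_Suc_eq)

lemma pp_raw_cases:
  "S \<in> pp_raw mk M n \<Longrightarrow> S \<subseteq> Inl ` M \<or> (\<exists>m. n = Suc m \<and> S \<subseteq> Inr ` mk ` pp_raw mk M m)"
proof (induction n arbitrary: S)
  case (Suc n)
  show ?case
  proof (cases "S \<in> pp_raw mk M n")
    case True
    from Suc.IH[OF True] show ?thesis
    proof
      assume "\<exists>m. n = Suc m \<and> S \<subseteq> Inr ` mk ` pp_raw mk M m"
      then obtain m where "n = Suc m" "S \<subseteq> Inr ` mk ` pp_raw mk M m" by blast
      moreover have "pp_raw mk M m \<subseteq> pp_raw mk M n" using \<open>n = Suc m\<close> pp_raw_mono[of m n] by simp
      ultimately have "S \<subseteq> Inr ` mk ` pp_raw mk M n" by blast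
      then show ?thesis by blast
    qed simp
  next
    case False
    with Suc.prems have "S \<subseteq> Inr ` mk ` pp_raw mk M n" by simp
    then show ?thesis by blast
  qed
qed simp

lemma Pow_Inl_subset_pp_raw: "Pow (Inl ` M) \<subseteq> pp_raw mk M n"
  using pp_raw_mono[of 0 n mk M] by simp

lemma pp_raws_Inl: "S \<in> pp_raws mk M \<Longrightarrow> Inl a \<in> S \<Longrightarrow> a \<in> M"
  by (blast dest: pp_raw_cases)

lemma pp_raws_Inr: "S \<in> pp_raws mk M \<Longrightarrow> Inr x \<in> S \<Longrightarrow> x \<in> PPb mk M"
  unfolding PPb_def by (blast dest: pp_raw_cases)

lemma PPb_induct[consumes 1, case_names mk]:
  assumes "z \<in> PPb mk M"
    and step: "\<And>S. S \<in> pp_raws mk M \<Longrightarrow> (\<And>x. Inr x \<in> S \<Longrightarrow> P x) \<Longrightarrow> P (mk S)"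
  shows "P z"
proof -
  have "P (mk S)" if "S \<in> pp_raw mk M n" for S n
    using that
  proof (induction n arbitrary: S rule: less_induct)
    case (less n)
    show ?case
    proof (rule step)
      show "S \<in> pp_raws mk M" using less.prems by blast
      fix x assume "Inr x \<in> S"
      with pp_raw_cases[OF less.prems] obtain m S' where "n = Suc m" "S' \<in> pp_raw mk M m" "x = mk S'"
        by blast
      with less.IH show "P x" by blast
    qed
  qed
  with assms(1) show ?thesis unfolding PPb_def by blast
qed

definition raw_map :: "('a \<Rightarrow> 'b) \<Rightarrow> ('v \<Rightarrow> 'w) \<Rightarrow> ('a + 'v) set \<Rightarrow> ('b + 'w) set" where
  "raw_map f F S = (\<lambda>a. Inl (f a)) ` {a. Inl a \<in> S} \<union> (\<lambda>x. Inr (F x)) ` {x. Inr x \<in> S}"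

lemma Inl_in_raw_map_iff[simp]: "Inl b \<in> raw_map f F S \<longleftrightarrow> (\<exists>a. Inl a \<in> S \<and> b = f a)"
  by (auto simp: raw_map_def)

lemma Inr_in_raw_map_iff[simp]: "Inr y \<in> raw_map f F S \<longleftrightarrow> (\<exists>x. Inr x \<in> S \<and> y = F x)"
  by (auto simp: raw_map_def)

lemma raw_map_comp: "raw_map g G (raw_map f F S) = raw_map (g \<circ> f) (G \<circ> F) S"
  by (auto simp: raw_map_def)

lemma raw_map_cong:
  "(\<And>a. Inl a \<in> S \<Longrightarrow> f a = f' a) \<Longrightarrow> (\<And>x. Inr x \<in> S \<Longrightarrow> F x = F' x)
    \<Longrightarrow> raw_map f F S = raw_map f' F' S"
  by (force simp: raw_map_def)

lemma raw_map_eq_imp_subset: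
  assumes eq: "raw_map f F S1 = raw_map f F S2"
    and atoms: "\<And>a b. Inl a \<in> S1 \<Longrightarrow> Inl b \<in> S2 \<Longrightarrow> f a = f b \<Longrightarrow> a = b"
    and sets: "\<And>x y. Inr x \<in> S1 \<Longrightarrow> Inr y \<in> S2 \<Longrightarrow> F x = F y \<Longrightarrow> x = y"
  shows "S1 \<subseteq> S2"
proof
  fix u assume u: "u \<in> S1"
  show "u \<in> S2"
  proof (cases u)
    case (Inl a)
    with u have "Inl (f a) \<in> raw_map f F S2" unfolding eq[symmetric] by auto
    then obtain b where "Inl b \<in> S2" "f a = f b" by auto
    with atoms[of a b] u Inl show ?thesis by simp
  next
    case (Inr x)
    with u have "Inr (F x) \<in> raw_map f F S2" unfolding eq[symmetric] by auto
    then obtain y where "Inr y \<in> S2" "F x = F y" by auto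
    with sets[of x y] u Inr show ?thesis by simp
  qed
qed

lemma raw_map_eq_imp_eq:
  assumes eq: "raw_map f F S1 = raw_map f F S2"
    and atoms: "\<And>a b. Inl a \<in> S1 \<Longrightarrow> Inl b \<in> S2 \<Longrightarrow> f a = f b \<Longrightarrow> a = b"
    and sets: "\<And>x y. Inr x \<in> S1 \<Longrightarrow> Inr y \<in> S2 \<Longrightarrow> F x = F y \<Longrightarrow> x = y"
  shows "S1 = S2"
proof
  show "S1 \<subseteq> S2" using eq atoms sets by (rule raw_map_eq_imp_subset)
  show "S2 \<subseteq> S1"
    using eq[symmetric] by (rule raw_map_eq_imp_subset) (metis atoms sets)+
qed

lemma ppgraph_mkI:
  "S \<in> pp_raws mk M \<Longrightarrow> (\<And>x. Inr x \<in> S \<Longrightarrow> ppgraph mk mk' M f x (F x))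
    \<Longrightarrow> ppgraph mk mk' M f (mk S) (mk' (raw_map f F S))"
  unfolding raw_map_def by (rule ppgraph.intros) auto

lemma ppgraph_functional:
  assumes "pp_universe mk M"
  shows "ppgraph mk mk' M f z w1 \<Longrightarrow> ppgraph mk mk' M f z w2 \<Longrightarrow> w1 = w2"
proof (induction arbitrary: w2 rule: ppgraph.induct)
  case (1 S F)
  note IH = 1(2)
  from 1(3) show ?case
  proof cases
    case (1 S2 F2)
    have "S = S2"
      using assms \<open>S \<in> pp_raws mk M\<close> \<open>S2 \<in> pp_raws mk M\<close> \<open>mk S = mk S2\<close>
      by (simp add: pp_universe_def inj_on_eq_iff)
    moreover have "F x = F2 x" if "Inr x \<in> S" for x
      using that IH \<open>S = S2\<close> \<open>\<forall>x. Inr x \<in> S2 \<longrightarrow> _\<close> by blast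
    ultimately have "raw_map f F S = raw_map f F2 S2"
      using raw_map_cong[of S f f F F2] by simp
    then show ?thesis using \<open>w2 = _\<close> by (simp add: raw_map_def)
  qed
qed

lemma ppgraph_exists: "z \<in> PPb mk M \<Longrightarrow> \<exists>w. ppgraph mk mk' M f z w"
proof (induction rule: PPb_induct)
  case (mk S)
  then obtain F where "\<And>x. Inr x \<in> S \<Longrightarrow> ppgraph mk mk' M f x (F x)" by metis
  with ppgraph_mkI[OF mk.hyps] show ?case by blast
qed

lemma ppmap_graph:
  "pp_universe mk M \<Longrightarrow> z \<in> PPb mk M \<Longrightarrow> ppgraph mk mk' M f z (ppmap mk mk' M f z)"
  unfolding ppmap_def by (metis ppgraph_exists ppgraph_functional theI)

lemma ppmap_mk:
  assumes "pp_universe mk M" and "S \<in> pp_raws mk M"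
  shows "ppmap mk mk' M f (mk S) = mk' (raw_map f (ppmap mk mk' M f) S)"
proof (rule ppgraph_functional[OF assms(1)])
  show "ppgraph mk mk' M f (mk S) (ppmap mk mk' M f (mk S))"
    using assms by (intro ppmap_graph) (auto simp: PPb_def)
  show "ppgraph mk mk' M f (mk S) (mk' (raw_map f (ppmap mk mk' M f) S))"
    using assms by (intro ppgraph_mkI ppmap_graph) (auto intro: pp_raws_Inr)
qed

lemma raw_map_atoms_subset:
  "S \<subseteq> Inl ` M \<Longrightarrow> f ` M \<subseteq> N \<Longrightarrow> raw_map f F S \<subseteq> Inl ` N"
  unfolding raw_map_def by blast

lemma raw_map_sets_subset:
  "S \<subseteq> Inr ` X \<Longrightarrow> F ` X \<subseteq> Y \<Longrightarrow> raw_map f F S \<subseteq> Inr ` Y"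
  unfolding raw_map_def by blast

lemma raw_map_ppmap_level:
  assumes univ: "pp_universe mk M" and f: "f ` M \<subseteq> N"
  shows "S \<in> pp_raw mk M n \<Longrightarrow> raw_map f (ppmap mk mk' M f) S \<in> pp_raw mk' N n"
proof (induction n arbitrary: S)
  case 0
  then have "raw_map f (ppmap mk mk' M f) S \<subseteq> Inl ` N"
    by (intro raw_map_atoms_subset[OF _ f]) simp
  then show ?case by simp
next
  case (Suc n)
  from pp_raw_cases[OF Suc.prems] show ?case
  proof
    assume "S \<subseteq> Inl ` M"
    then have "raw_map f (ppmap mk mk' M f) S \<subseteq> Inl ` N"
      by (rule raw_map_atoms_subset[OF _ f])
    then show ?thesis using Pow_Inl_subset_pp_raw[of N mk' "Suc n"] by blast
  next
    assume "\<exists>m. Suc n = Suc m \<and> S \<subseteq> Inr ` mk ` pp_raw mk M m"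
    then have S: "S \<subseteq> Inr ` mk ` pp_raw mk M n" by simp
    have "ppmap mk mk' M f (mk S') \<in> mk' ` pp_raw mk' N n" if "S' \<in> pp_raw mk M n" for S'
    proof -
      have "S' \<in> pp_raws mk M" using that by blast
      with Suc.IH[OF that] show ?thesis by (simp add: ppmap_mk[OF univ])
    qed
    then have "raw_map f (ppmap mk mk' M f) S \<subseteq> Inr ` mk' ` pp_raw mk' N n"
      by (intro raw_map_sets_subset[OF S]) blast
    then show ?thesis by simp
  qed
qed

lemma raw_map_ppmap_in_pp_raws:
  "pp_universe mk M \<Longrightarrow> f ` M \<subseteq> N \<Longrightarrow> S \<in> pp_raws mk M
    \<Longrightarrow> raw_map f (ppmap mk mk' M f) S \<in> pp_raws mk' N"
  by (auto dest: raw_map_ppmap_level)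

lemma ppmap_in_PPb:
  assumes "pp_universe mk M" and "f ` M \<subseteq> N" and "z \<in> PPb mk M"
  shows "ppmap mk mk' M f z \<in> PPb mk' N"
proof -
  from assms(3) obtain S where S: "S \<in> pp_raws mk M" "z = mk S" unfolding PPb_def by blast
  have "raw_map f (ppmap mk mk' M f) S \<in> pp_raws mk' N"
    by (rule raw_map_ppmap_in_pp_raws[OF assms(1,2) S(1)])
  then show ?thesis unfolding S(2) ppmap_mk[OF assms(1) S(1)] PPb_def by (rule imageI)
qed

lemma ppmap_mk_eq_iff:
  assumes "pp_universe mk1 M1" "f1 ` M1 \<subseteq> N" "S1 \<in> pp_raws mk1 M1"
    and "pp_universe mk2 M2" "f2 ` M2 \<subseteq> N" "S2 \<in> pp_raws mk2 M2"
    and "pp_universe mk' N"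
  shows "ppmap mk1 mk' M1 f1 (mk1 S1) = ppmap mk2 mk' M2 f2 (mk2 S2) \<longleftrightarrow>
    raw_map f1 (ppmap mk1 mk' M1 f1) S1 = raw_map f2 (ppmap mk2 mk' M2 f2) S2"
proof -
  have inj: "inj_on mk' (pp_raws mk' N)" using assms(7) by (simp add: pp_universe_def)
  show ?thesis
    unfolding ppmap_mk[OF assms(1,3)] ppmap_mk[OF assms(4,6)]
    using inj_on_eq_iff[OF inj raw_map_ppmap_in_pp_raws[OF assms(1-3)]
        raw_map_ppmap_in_pp_raws[OF assms(4-6)]] .
qed

lemma ppmap_comp:
  assumes "pp_universe mk M" and "pp_universe mk' N" and "f ` M \<subseteq> N" and "z \<in> PPb mk M"
  shows "ppmap mk' mk'' N g (ppmap mk mk' M f z) = ppmap mk mk'' M (g \<circ> f) z"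
  using assms(4)
proof (induction rule: PPb_induct)
  case (mk S)
  have "ppmap mk' mk'' N g (ppmap mk mk' M f (mk S))
      = mk'' (raw_map g (ppmap mk' mk'' N g) (raw_map f (ppmap mk mk' M f) S))"
    by (simp only: ppmap_mk[OF assms(1) mk.hyps]
        ppmap_mk[OF assms(2) raw_map_ppmap_in_pp_raws[OF assms(1,3) mk.hyps]])
  also have "\<dots> = mk'' (raw_map (g \<circ> f) (ppmap mk mk'' M (g \<circ> f)) S)"
    unfolding raw_map_comp using mk.IH
    by (intro arg_cong[where f=mk''] raw_map_cong) (simp_all add: comp_def)
  also have "\<dots> = ppmap mk mk'' M (g \<circ> f) (mk S)"
    using assms(1) mk.hyps by (simp add: ppmap_mk)
  finally show ?case .
qed

lemma ppmap_cong:
  assumes "pp_universe mk M" and "\<And>a. a \<in> M \<Longrightarrow> f a = g a" and "z \<in> PPb mk M"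
  shows "ppmap mk mk' M f z = ppmap mk mk' M g z"
  using assms(3)
proof (induction rule: PPb_induct)
  case (mk S)
  have "raw_map f (ppmap mk mk' M f) S = raw_map g (ppmap mk mk' M g) S"
    using mk.IH assms(2) pp_raws_Inl[OF mk.hyps] by (intro raw_map_cong) simp_all
  then show ?case using assms(1) mk.hyps by (simp add: ppmap_mk)
qed

lemma inj_on_ppmap:
  assumes univ: "pp_universe mk M" "pp_universe mk' N" and f: "f ` M \<subseteq> N" "inj_on f M"
  shows "inj_on (ppmap mk mk' M f) (PPb mk M)"
proof -
  have "\<forall>z2\<in>PPb mk M. ppmap mk mk' M f z1 = ppmap mk mk' M f z2 \<longrightarrow> z1 = z2"
    if "z1 \<in> PPb mk M" for z1
    using that
  proof (induction rule: PPb_induct)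
    case (mk S1)
    show ?case
    proof (intro ballI impI)
      fix z2 assume "z2 \<in> PPb mk M" and eq: "ppmap mk mk' M f (mk S1) = ppmap mk mk' M f z2"
      then obtain S2 where S2: "S2 \<in> pp_raws mk M" "z2 = mk S2" unfolding PPb_def by blast
      from eq have "raw_map f (ppmap mk mk' M f) S1 = raw_map f (ppmap mk mk' M f) S2"
        using ppmap_mk_eq_iff[OF univ(1) f(1) mk.hyps univ(1) f(1) S2(1) univ(2)] S2(2) by simp
      then have "S1 = S2"
      proof (rule raw_map_eq_imp_eq)
        show "a = b" if "Inl a \<in> S1" "Inl b \<in> S2" "f a = f b" for a b
          using inj_onD[OF f(2) that(3) pp_raws_Inl[OF mk.hyps that(1)] pp_raws_Inl[OF S2(1) that(2)]] .
        show "x = y" if "Inr x \<in> S1" "Inr y \<in> S2"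
          "ppmap mk mk' M f x = ppmap mk mk' M f y" for x y
          using mk.IH[OF that(1)] pp_raws_Inr[OF S2(1) that(2)] that(3) by blast
      qed
      then show "mk S1 = z2" using S2 by simp
    qed
  qed
  then show ?thesis unfolding inj_on_def by blast
qed

lemma mk_in_level_iff:
  assumes "pp_universe mk M" and "S \<in> pp_raws mk M"
  shows "mk S \<in> mk ` pp_raw mk M n \<longleftrightarrow> S \<in> pp_raw mk M n"
  using assms unfolding pp_universe_def by (intro inj_on_image_mem_iff) blast+

lemma ppmap_reflects_level:
  assumes univ: "pp_universe mk M" "pp_universe mk' N" and f: "f ` M \<subseteq> N"
  shows "z \<in> PPb mk M \<Longrightarrow> ppmap mk mk' M f z \<in> mk' ` pp_raw mk' N n \<Longrightarrow> z \<in> mk ` pp_raw mk M n"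
proof (induction n arbitrary: z rule: less_induct)
  case (less n)
  from less.prems(1) obtain S where S: "S \<in> pp_raws mk M" "z = mk S" unfolding PPb_def by blast
  let ?S' = "raw_map f (ppmap mk mk' M f) S"
  have "mk' ?S' \<in> mk' ` pp_raw mk' N n"
    using less.prems(2) unfolding S(2) ppmap_mk[OF univ(1) S(1)] .
  then have S': "?S' \<in> pp_raw mk' N n"
    using mk_in_level_iff[OF univ(2) raw_map_ppmap_in_pp_raws[OF univ(1) f S(1)]] by simp
  from pp_raw_cases[OF S'] have "S \<in> pp_raw mk M n"
  proof
    assume atoms: "?S' \<subseteq> Inl ` N"
    have "S \<subseteq> Inl ` M"
    proof
      fix u assume u: "u \<in> S"
      show "u \<in> Inl ` M"
      proof (cases u)
        case (Inl a)
        with u pp_raws_Inl[OF S(1)] show ?thesis by simp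
      next
        case (Inr x)
        with u have "Inr (ppmap mk mk' M f x) \<in> ?S'" by auto
        with atoms show ?thesis by blast
      qed
    qed
    then show ?thesis using Pow_Inl_subset_pp_raw[of M mk n] by blast
  next
    assume "\<exists>m. n = Suc m \<and> ?S' \<subseteq> Inr ` mk' ` pp_raw mk' N m"
    then obtain m where m: "n = Suc m" "?S' \<subseteq> Inr ` mk' ` pp_raw mk' N m" by blast
    have "S \<subseteq> Inr ` mk ` pp_raw mk M m"
    proof
      fix u assume u: "u \<in> S"
      show "u \<in> Inr ` mk ` pp_raw mk M m"
      proof (cases u)
        case (Inl a)
        with u have "Inl (f a) \<in> ?S'" by auto
        with m(2) show ?thesis by blast
      next
        case (Inr x)
        with u have "Inr (ppmap mk mk' M f x) \<in> ?S'" by auto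
        with m(2) have "ppmap mk mk' M f x \<in> mk' ` pp_raw mk' N m" by blast
        with less.IH[of m x] m(1) pp_raws_Inr[OF S(1)] u Inr show ?thesis by blast
      qed
    qed
    with m(1) show ?thesis by simp
  qed
  with S(2) show ?case by blast
qed

lemma mk_in_ppmap_image:
  assumes univ: "pp_universe mk M" "pp_universe mk' N" and f: "f ` M \<subseteq> N"
    and S': "S' \<in> pp_raws mk' N"
    and atoms: "\<And>b. Inl b \<in> S' \<Longrightarrow> b \<in> f ` M"
    and sets: "\<And>y. Inr y \<in> S' \<Longrightarrow> y \<in> ppmap mk mk' M f ` PPb mk M"
  shows "mk' S' \<in> ppmap mk mk' M f ` PPb mk M"
proof -
  define S where "S = Inl ` {a \<in> M. Inl (f a) \<in> S'}
    \<union> Inr ` {z \<in> PPb mk M. Inr (ppmap mk mk' M f z) \<in> S'}"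
  have S_Inl: "Inl a \<in> S \<longleftrightarrow> a \<in> M \<and> Inl (f a) \<in> S'" for a
    by (auto simp: S_def)
  have S_Inr: "Inr z \<in> S \<longleftrightarrow> z \<in> PPb mk M \<and> Inr (ppmap mk mk' M f z) \<in> S'" for z
    by (auto simp: S_def)
  from S' obtain n where n: "S' \<in> pp_raw mk' N n" by blast
  from pp_raw_cases[OF n] have "S \<in> pp_raws mk M"
  proof
    assume S'_atoms: "S' \<subseteq> Inl ` N"
    have "S \<subseteq> Inl ` M"
    proof
      fix u assume u: "u \<in> S"
      show "u \<in> Inl ` M"
        using u S'_atoms by (cases u) (auto simp: S_Inl S_Inr)
    qed
    then show ?thesis using Pow_Inl_subset_pp_raw[of M mk 0] by blast
  next
    assume "\<exists>m. n = Suc m \<and> S' \<subseteq> Inr ` mk' ` pp_raw mk' N m"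
    then obtain m where S'_sets: "S' \<subseteq> Inr ` mk' ` pp_raw mk' N m" by blast
    have "S \<subseteq> Inr ` mk ` pp_raw mk M m"
    proof
      fix u assume u: "u \<in> S"
      show "u \<in> Inr ` mk ` pp_raw mk M m"
      proof (cases u)
        case (Inl a)
        with u S'_sets show ?thesis by (auto simp: S_Inl)
      next
        case (Inr z)
        with u S_Inr S'_sets have "z \<in> PPb mk M" "ppmap mk mk' M f z \<in> mk' ` pp_raw mk' N m"
          by blast+
        with Inr ppmap_reflects_level[OF univ f] show ?thesis by blast
      qed
    qed
    then have "S \<in> pp_raw mk M (Suc m)" by simp
    then show ?thesis by blast
  qed
  moreover have "raw_map f (ppmap mk mk' M f) S = S'"
  proof (rule set_eqI)
    fix u show "u \<in> raw_map f (ppmap mk mk' M f) S \<longleftrightarrow> u \<in> S'"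
    proof (cases u)
      case (Inl b)
      then show ?thesis using atoms by (auto simp: S_Inl)
    next
      case (Inr y)
      then show ?thesis using sets by (auto simp: S_Inr)
    qed
  qed
  ultimately have "ppmap mk mk' M f (mk S) = mk' S'" by (simp add: ppmap_mk[OF univ(1)])
  moreover have "mk S \<in> PPb mk M" using \<open>S \<in> pp_raws mk M\<close> unfolding PPb_def by (rule imageI)
  ultimately show ?thesis by (metis image_eqI)
qed

lemma is_pullback_maps:
  assumes "is_pullback P B C D p q f g"
  shows "p ` P \<subseteq> B" "q ` P \<subseteq> C" "f ` B \<subseteq> D" "g ` C \<subseteq> D"
  using assms by (simp_all add: is_pullback_def)

lemma is_pullback_commutes: "is_pullback P B C D p q f g \<Longrightarrow> x \<in> P \<Longrightarrow> f (p x) = g (q x)"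
  by (simp add: is_pullback_def)

lemma is_pullback_exists:
  "is_pullback P B C D p q f g \<Longrightarrow> b \<in> B \<Longrightarrow> c \<in> C \<Longrightarrow> f b = g c
    \<Longrightarrow> \<exists>x\<in>P. p x = b \<and> q x = c"
  unfolding is_pullback_def by blast

lemma is_pullback_unique:
  assumes "is_pullback P B C D p q f g" and "x \<in> P" and "y \<in> P"
    and "p x = p y" and "q x = q y"
  shows "x = y"
proof -
  have "p x \<in> B" "q x \<in> C" using assms(1,2) by (auto simp: is_pullback_def)
  moreover have "f (p x) = g (q x)" using is_pullback_commutes[OF assms(1,2)] .
  moreover have "\<forall>b\<in>B. \<forall>c\<in>C. f b = g c \<longrightarrow> (\<exists>!z. z \<in> P \<and> p z = b \<and> q z = c)"
    using assms(1) by (simp add: is_pullback_def)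
  ultimately have "\<exists>!z. z \<in> P \<and> p z = p x \<and> q z = q x" by blast
  with assms(2-5) show ?thesis by metis
qed

lemma is_pullback_inj_on_fst:
  assumes pb: "is_pullback P B C D p q f g" and g: "inj_on g C"
  shows "inj_on p P"
proof (rule inj_onI)
  fix x y assume x: "x \<in> P" and y: "y \<in> P" and eq: "p x = p y"
  have "g (q x) = g (q y)"
    using is_pullback_commutes[OF pb x] is_pullback_commutes[OF pb y] eq by simp
  moreover have "q x \<in> C" "q y \<in> C" using pb x y by (auto simp: is_pullback_def)
  ultimately have "q x = q y" by (rule inj_onD[OF g])
  with pb x y eq show "x = y" by (rule is_pullback_unique)
qed

lemma ppmap_commutes:
  assumes univ: "pp_universe mkP P" "pp_universe mkB B" "pp_universe mkC C"
    and maps: "p ` P \<subseteq> B" "q ` P \<subseteq> C"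
    and comm: "\<And>x. x \<in> P \<Longrightarrow> f (p x) = g (q x)"
    and z: "z \<in> PPb mkP P"
  shows "ppmap mkB mkD B f (ppmap mkP mkB P p z) = ppmap mkC mkD C g (ppmap mkP mkC P q z)"
proof -
  have "ppmap mkB mkD B f (ppmap mkP mkB P p z) = ppmap mkP mkD P (f \<circ> p) z"
    using ppmap_comp[OF univ(1,2) maps(1) z] .
  also have "\<dots> = ppmap mkP mkD P (g \<circ> q) z"
    by (rule ppmap_cong[OF univ(1) _ z]) (simp add: comm)
  also have "\<dots> = ppmap mkC mkD C g (ppmap mkP mkC P q z)"
    using ppmap_comp[OF univ(1,3) maps(2) z, of mkD g] by simp
  finally show ?thesis .
qed

lemma ppmap_lift_along_pullback:
  assumes pb: "is_pullback P B C D p q f g"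
    and univ: "pp_universe mkP P" "pp_universe mkB B" "pp_universe mkC C" "pp_universe mkD D"
    and "X \<in> PPb mkB B" and "Y \<in> PPb mkC C"
    and "ppmap mkB mkD B f X = ppmap mkC mkD C g Y"
  shows "X \<in> ppmap mkP mkB P p ` PPb mkP P"
  using assms(6-8)
proof (induction arbitrary: Y rule: PPb_induct)
  case (mk SX)
  note maps = is_pullback_maps[OF pb]
  from \<open>Y \<in> PPb mkC C\<close> obtain T where T: "T \<in> pp_raws mkC C" "Y = mkC T"
    unfolding PPb_def by blast
  have raw_eq: "raw_map f (ppmap mkB mkD B f) SX = raw_map g (ppmap mkC mkD C g) T"
    using mk.prems(2) ppmap_mk_eq_iff[OF univ(2) maps(3) mk.hyps univ(3) maps(4) T(1) univ(4)] T(2)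
    by simp
  show ?case
  proof (rule mk_in_ppmap_image[OF univ(1,2) maps(1) mk.hyps])
    fix b assume b: "Inl b \<in> SX"
    then have "Inl (f b) \<in> raw_map g (ppmap mkC mkD C g) T" unfolding raw_eq[symmetric] by auto
    then obtain c where c: "Inl c \<in> T" "f b = g c" by auto
    from is_pullback_exists[OF pb pp_raws_Inl[OF mk.hyps b] pp_raws_Inl[OF T(1) c(1)] c(2)]
    show "b \<in> p ` P" by blast
  next
    fix x assume x: "Inr x \<in> SX"
    then have "Inr (ppmap mkB mkD B f x) \<in> raw_map g (ppmap mkC mkD C g) T"
      unfolding raw_eq[symmetric] by auto
    then obtain y where "Inr y \<in> T" "ppmap mkB mkD B f x = ppmap mkC mkD C g y" by auto
    with mk.IH[OF x] pp_raws_Inr[OF T(1)] show "x \<in> ppmap mkP mkB P p ` PPb mkP P" by blast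
  qed
qed

theorem mainTheorem6:
  fixes A :: "'a set" and B :: "'b set" and C :: "'c set" and D :: "'d set"
    and piB :: "'a \<Rightarrow> 'b" and piC :: "'a \<Rightarrow> 'c"
    and f1 :: "'b \<Rightarrow> 'd" and g1 :: "'c \<Rightarrow> 'd"
    and mkA :: "('a + 'va) set \<Rightarrow> 'va" and mkB :: "('b + 'vb) set \<Rightarrow> 'vb"
    and mkC :: "('c + 'vc) set \<Rightarrow> 'vc" and mkD :: "('d + 'vd) set \<Rightarrow> 'vd"
  assumes "is_pullback A B C D piB piC f1 g1"
    and "inj_on g1 C"
    and "pp_universe mkA A" and "pp_universe mkB B"
    and "pp_universe mkC C" and "pp_universe mkD D"
  shows "is_pullback (PPb mkA A) (PPb mkB B) (PPb mkC C) (PPb mkD D)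
           (ppmap mkA mkB A piB) (ppmap mkA mkC A piC)
           (ppmap mkB mkD B f1) (ppmap mkC mkD C g1)"
proof -
  note pb = assms(1) and univ = assms(3-6)
  note maps = is_pullback_maps[OF pb]
  have inj_B: "inj_on (ppmap mkA mkB A piB) (PPb mkA A)"
    by (rule inj_on_ppmap[OF univ(1,2) maps(1) is_pullback_inj_on_fst[OF pb assms(2)]])
  have inj_G: "inj_on (ppmap mkC mkD C g1) (PPb mkC C)"
    by (rule inj_on_ppmap[OF univ(3,4) maps(4) assms(2)])
  have comm: "ppmap mkB mkD B f1 (ppmap mkA mkB A piB z) = ppmap mkC mkD C g1 (ppmap mkA mkC A piC z)"
    if "z \<in> PPb mkA A" for z
    using ppmap_commutes[OF univ(1-3) maps(1,2) _ that, of f1 g1 mkD] is_pullback_commutes[OF pb]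
    by blast
  have unique_lift: "\<exists>!z. z \<in> PPb mkA A \<and> ppmap mkA mkB A piB z = X \<and> ppmap mkA mkC A piC z = Y"
    if X: "X \<in> PPb mkB B" and Y: "Y \<in> PPb mkC C"
      and eq: "ppmap mkB mkD B f1 X = ppmap mkC mkD C g1 Y" for X Y
  proof -
    from ppmap_lift_along_pullback[OF pb univ X Y eq]
    obtain z where z: "z \<in> PPb mkA A" "ppmap mkA mkB A piB z = X" by blast
    have "ppmap mkC mkD C g1 (ppmap mkA mkC A piC z) = ppmap mkC mkD C g1 Y"
      using comm[OF z(1)] z(2) eq by simp
    then have "ppmap mkA mkC A piC z = Y"
      by (rule inj_onD[OF inj_G _ ppmap_in_PPb[OF univ(1) maps(2) z(1)] Y])
    with z inj_onD[OF inj_B] show ?thesis by blast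
  qed
  show ?thesis
    unfolding is_pullback_def
    using unique_lift comm ppmap_in_PPb[OF univ(1) maps(1)] ppmap_in_PPb[OF univ(1) maps(2)]
      ppmap_in_PPb[OF univ(2) maps(3)] ppmap_in_PPb[OF univ(3) maps(4)]
    by (intro conjI ballI impI image_subsetI) simp_all
qed

end
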